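(* Let $n\geq 4$ and let $A$ and $B$ be two $n\times n$ generalized tournament matrices. Suppose that $A$ is indecomposable. If $A$ and $B$ have equal corresponding principal minors of all orders, then $A=B$ or $A=B^{t}$.
   Context: A generalized tournament matrix of order $n$ is a real $n\times n$ matrix $M=(m_{ij})$ with nonnegative entries satisfying $M+M^{t}=J_n-I_n$ ($J_n$ the all-ones matrix, $I_n$ the identity). Write $[n]=\{1,\ldots,n\}$. A clan of $M$ is a subset $X\subseteq[n]$ such that for all $i,j\in X$ and $k\in[n]\setminus X$, $m_{ik}=m_{jk}$ and $m_{ki}=m_{kj}$. The empty set, singletons and $[n]$ are the trivial clans; $M$ is indecomposable if all its clans are trivial. *)

theory Defs
  imports "HOL-Analysis.Analysis"
begin

text \<open>Matrices of order n are represented as functions nat \<Rightarrow> nat \<Rightarrow> real,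
  with indices in {0..<n} (playing the role of [n]).\<close>

definition gen_tournament :: "nat \<Rightarrow> (nat \<Rightarrow> nat \<Rightarrow> real) \<Rightarrow> bool" where
  "gen_tournament n M \<longleftrightarrow>
     (\<forall>i<n. \<forall>j<n. M i j \<ge> 0) \<and>
     (\<forall>i<n. \<forall>j<n. M i j + M j i = (if i = j then 0 else 1))"

definition is_clan :: "nat \<Rightarrow> (nat \<Rightarrow> nat \<Rightarrow> real) \<Rightarrow> nat set \<Rightarrow> bool" where
  "is_clan n M X \<longleftrightarrow> X \<subseteq> {0..<n} \<and>
     (\<forall>i\<in>X. \<forall>j\<in>X. \<forall>k\<in>{0..<n} - X. M i k = M j k \<and> M k i = M k j)"

definition indecomposable :: "nat \<Rightarrow> (nat \<Rightarrow> nat \<Rightarrow> real) \<Rightarrow> bool" where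
  "indecomposable n M \<longleftrightarrow>
     (\<forall>X. is_clan n M X \<longrightarrow> card X \<le> 1 \<or> X = {0..<n})"

definition principal_minor :: "(nat \<Rightarrow> nat \<Rightarrow> real) \<Rightarrow> nat set \<Rightarrow> real" where
  "principal_minor M S = (\<Sum>p | p permutes S. of_int (sign p) * (\<Prod>i\<in>S. M i (p i)))"

end

theory Submission
  imports Defs
begin

(* The principal minors of order 2 give A i j * A j i = B i j * B j i, so on every pair B agrees
   with A or with its transpose; those of order 3 show that a triangle on which B follows A on two
   sides and the transpose on the third is degenerate. Call a vertex set coherent if B agrees with
   A, or with the transpose of A, on all of it. An indecomposable generalized tournament on at
   least 3 vertices contains an indecomposable subset of 3 or 4 vertices, and such a subset is
   coherent (for 4 vertices the minor of order 4 is needed). By a theorem of Ehrenfeucht and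
   Rozenberg, an indecomposable proper subset X with at least 3 elements can be enlarged by one or
   two vertices to an indecomposable subset, and coherence of X propagates to the enlarged set.
   Hence the whole vertex set is coherent. *)

section \<open>Principal minors of small order\<close>

lemma principal_minor_empty [simp]: "principal_minor M {} = 1"
  by (simp add: principal_minor_def)

text \<open>Laplace expansion along row \<open>a\<close>: the term of column \<open>b\<close> is the minor on \<open>S\<close> of the
  matrix whose column \<open>b\<close> is replaced by column \<open>a\<close>.\<close>
lemma principal_minor_insert:
  assumes "finite S" and "a \<notin> S"
  shows "principal_minor M (insert a S) =
    (\<Sum>b\<in>insert a S. (if b = a then 1 else -1) * M a b *
        principal_minor (\<lambda>i j. if j = b then M i a else M i j) S)"
proof -
  let ?M' = "\<lambda>b i j. if j = b then M i a else M i j"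
  have "principal_minor M (insert a S) =
    (\<Sum>b\<in>insert a S. \<Sum>q | q permutes S. of_int (sign (Transposition.transpose a b \<circ> q)) *
        (\<Prod>i\<in>insert a S. M i ((Transposition.transpose a b \<circ> q) i)))"
    unfolding principal_minor_def by (rule sum_over_permutations_insert[OF assms])
  also have "\<dots> = (\<Sum>b\<in>insert a S. \<Sum>q | q permutes S.
      (if b = a then 1 else -1) * M a b * (of_int (sign q) * (\<Prod>i\<in>S. ?M' b i (q i))))"
  proof (intro sum.cong refl)
    fix b q assume "q \<in> {q. q permutes S}"
    then have q: "q permutes S" by simp
    have "sign (Transposition.transpose a b \<circ> q) = (if b = a then 1 else -1) * sign q"
      using sign_compose[OF permutation_swap_id permutes_imp_permutation[OF assms(1) q]]
      by (simp add: sign_swap_id eq_commute)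
    moreover have "(\<Prod>i\<in>S. M i ((Transposition.transpose a b \<circ> q) i)) = (\<Prod>i\<in>S. ?M' b i (q i))"
    proof (rule prod.cong[OF refl])
      fix i assume "i \<in> S"
      then have "q i \<noteq> a" using q assms(2) permutes_in_image by fastforce
      then show "M i ((Transposition.transpose a b \<circ> q) i) = ?M' b i (q i)"
        by (auto simp: Transposition.transpose_def)
    qed
    moreover have "q a = a" using q assms(2) by (simp add: permutes_not_in)
    ultimately show "of_int (sign (Transposition.transpose a b \<circ> q)) *
        (\<Prod>i\<in>insert a S. M i ((Transposition.transpose a b \<circ> q) i)) =
      (if b = a then 1 else -1) * M a b * (of_int (sign q) * (\<Prod>i\<in>S. ?M' b i (q i)))"
      using assms by simp
  qed
  also have "\<dots> = (\<Sum>b\<in>insert a S. (if b = a then 1 else -1) * M a b * principal_minor (?M' b) S)"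
    unfolding principal_minor_def by (simp add: sum_distrib_left)
  finally show ?thesis .
qed

lemma principal_minor_singleton: "principal_minor M {a} = M a a"
  using principal_minor_insert[of "{}" a M] by simp

lemma principal_minor_2:
  "a \<noteq> b \<Longrightarrow> principal_minor M {a, b} = M a a * M b b - M a b * M b a"
  by (simp add: principal_minor_insert principal_minor_singleton)

lemma principal_minor_3:
  "distinct [a, b, c] \<Longrightarrow> principal_minor M {a, b, c} =
     M a a * (M b b * M c c - M b c * M c b) - M a b * (M b a * M c c - M b c * M c a)
     + M a c * (M b a * M c b - M b b * M c a)"
  by (simp add: principal_minor_insert principal_minor_singleton algebra_simps)

lemma card_ge_3_avoid_two:
  assumes "3 \<le> card X" obtains w where "w \<in> X" "w \<noteq> a" "w \<noteq> b"
proof -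
  have "finite X" using assms by (metis card.infinite not_numeral_le_zero)
  moreover have "card {a, b} \<le> 2" by (cases "a = b") auto
  ultimately have "\<not> X \<subseteq> {a, b}" using assms card_mono[of "{a, b}" X] by auto
  then show ?thesis using that by blast
qed

section \<open>Clans of a generalized tournament\<close>

locale generalized_tournament =
  fixes n :: nat and A :: "nat \<Rightarrow> nat \<Rightarrow> real"
  assumes gen_tournament: "gen_tournament n A"
begin

lemma skew: "i < n \<Longrightarrow> j < n \<Longrightarrow> i \<noteq> j \<Longrightarrow> A j i = 1 - A i j"
  using gen_tournament unfolding gen_tournament_def by (metis add.commute eq_diff_eq)

lemma diag: "i < n \<Longrightarrow> A i i = 0"
  using gen_tournament unfolding gen_tournament_def by fastforce

text \<open>Clans relative to a subset \<open>Y\<close> of the vertices. Only the columns are compared: by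
  \<open>skew\<close>, equal columns force equal rows.\<close>
definition clan_in :: "nat set \<Rightarrow> nat set \<Rightarrow> bool" where
  "clan_in Y K \<longleftrightarrow> K \<subseteq> Y \<and> (\<forall>i\<in>K. \<forall>j\<in>K. \<forall>k\<in>Y - K. A k i = A k j)"

definition indecomposable_on :: "nat set \<Rightarrow> bool" where
  "indecomposable_on Y \<longleftrightarrow> (\<forall>K. clan_in Y K \<longrightarrow> card K \<le> 1 \<or> K = Y)"

lemma clan_inD: "clan_in Y K \<Longrightarrow> i \<in> K \<Longrightarrow> j \<in> K \<Longrightarrow> k \<in> Y \<Longrightarrow> k \<notin> K \<Longrightarrow> A k i = A k j"
  unfolding clan_in_def by blast

lemma clan_in_restrict: "clan_in Y K \<Longrightarrow> Z \<subseteq> Y \<Longrightarrow> clan_in Z (K \<inter> Z)"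
  unfolding clan_in_def by blast

lemma indecomposable_onD: "indecomposable_on Y \<Longrightarrow> clan_in Y K \<Longrightarrow> 2 \<le> card K \<Longrightarrow> K = Y"
  unfolding indecomposable_on_def by fastforce

lemma clan_in_pair_iff:
  "clan_in Y {x, y} \<longleftrightarrow> x \<in> Y \<and> y \<in> Y \<and> (\<forall>k\<in>Y. k \<noteq> x \<longrightarrow> k \<noteq> y \<longrightarrow> A k x = A k y)"
  unfolding clan_in_def by auto

lemma clan_in_Diff_singleton_iff:
  "z \<in> Y \<Longrightarrow> clan_in Y (Y - {z}) \<longleftrightarrow> (\<forall>i\<in>Y. \<forall>j\<in>Y. i \<noteq> z \<longrightarrow> j \<noteq> z \<longrightarrow> A z i = A z j)"
  unfolding clan_in_def by auto

lemma indecomposable_on_card_le_4I: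
  assumes "finite Y" "card Y \<le> 4"
    and "\<forall>x\<in>Y. \<forall>y\<in>Y. x \<noteq> y \<longrightarrow> \<not> clan_in Y {x, y}"
    and "\<forall>z\<in>Y. \<not> clan_in Y (Y - {z})"
  shows "indecomposable_on Y"
  unfolding indecomposable_on_def
proof (intro allI impI)
  fix K assume K: "clan_in Y K"
  show "card K \<le> 1 \<or> K = Y"
  proof (rule ccontr)
    assume "\<not> ?thesis"
    then have "2 \<le> card K" "K \<subset> Y" using K by (auto simp: clan_in_def)
    then obtain z where z: "z \<in> Y" "K \<subseteq> Y - {z}" by blast
    have fin: "finite (Y - {z})" and card: "card (Y - {z}) \<le> 3"
      using z assms(1,2) by auto
    have "card K \<le> card (Y - {z})" using card_mono[OF fin z(2)] .
    then consider "card K = 2" | "K = Y - {z}"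
      using \<open>2 \<le> card K\<close> card_seteq[OF fin z(2)] card by linarith
    then show False
    proof cases
      case 1
      then obtain x y where "K = {x, y}" "x \<noteq> y" by (auto simp: card_2_iff)
      then show False using assms(3) K z by blast
    next
      case 2
      then show False using assms(4) K z by blast
    qed
  qed
qed

lemma indecomposable_on_3I:
  assumes "distinct [a, b, c]" and "A a b \<noteq> A a c" "A b a \<noteq> A b c" "A c a \<noteq> A c b"
  shows "indecomposable_on {a, b, c}"
  using assms by (intro indecomposable_on_card_le_4I)
    (simp_all add: clan_in_pair_iff clan_in_Diff_singleton_iff eq_commute)

text \<open>One hypothesis per pair, saying that one of the two other vertices separates it, and one per
  triple, saying that the fourth vertex separates it.\<close>
lemma indecomposable_on_4I:
  assumes "distinct [a, b, c, d]"
    and "A c a \<noteq> A c b \<or> A d a \<noteq> A d b"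
    and "A b a \<noteq> A b c \<or> A d a \<noteq> A d c"
    and "A b a \<noteq> A b d \<or> A c a \<noteq> A c d"
    and "A a b \<noteq> A a c \<or> A d b \<noteq> A d c"
    and "A a b \<noteq> A a d \<or> A c b \<noteq> A c d"
    and "A a c \<noteq> A a d \<or> A b c \<noteq> A b d"
    and "A d a \<noteq> A d b \<or> A d a \<noteq> A d c"
    and "A c a \<noteq> A c b \<or> A c a \<noteq> A c d"
    and "A b a \<noteq> A b c \<or> A b a \<noteq> A b d"
    and "A a b \<noteq> A a c \<or> A a b \<noteq> A a d"
  shows "indecomposable_on {a, b, c, d}"
  using assms by (intro indecomposable_on_card_le_4I)
    (simp_all add: clan_in_pair_iff clan_in_Diff_singleton_iff eq_commute)

text \<open>\<open>twin X s v\<close>: \<open>{s, v}\<close> is a clan of \<open>insert v X\<close>, i.e. \<open>v \<in> X(s)\<close> in the notation of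
  Ehrenfeucht and Rozenberg; \<open>exterior X v\<close>: \<open>X\<close> is a clan of \<open>insert v X\<close>, i.e. \<open>v \<in> Ext(X)\<close>.\<close>
definition twin :: "nat set \<Rightarrow> nat \<Rightarrow> nat \<Rightarrow> bool" where
  "twin X s v \<longleftrightarrow> (\<forall>w\<in>X - {s}. A w s = A w v)"

definition exterior :: "nat set \<Rightarrow> nat \<Rightarrow> bool" where
  "exterior X v \<longleftrightarrow> (\<forall>i\<in>X. \<forall>j\<in>X. A v i = A v j)"

lemma exteriorD: "exterior X v \<Longrightarrow> i \<in> X \<Longrightarrow> j \<in> X \<Longrightarrow> A v i = A v j"
  unfolding exterior_def by blast

definition constant_cut :: "nat set \<Rightarrow> nat set \<Rightarrow> nat set \<Rightarrow> bool" where
  "constant_cut Y P Q \<longleftrightarrow> P \<union> Q = Y \<and> P \<inter> Q = {} \<and> P \<noteq> {} \<and> Q \<noteq> {} \<and>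
     (\<exists>l. \<forall>p\<in>P. \<forall>q\<in>Q. A p q = l)"

lemma constant_cutI:
  assumes "P \<union> Q = Y" "P \<inter> Q = {}" "P \<noteq> {}" "Q \<noteq> {}"
    and "\<And>p q. p \<in> P \<Longrightarrow> q \<in> Q \<Longrightarrow> A p q = l"
  shows "constant_cut Y P Q"
  using assms unfolding constant_cut_def by blast

context
  fixes W P Q :: "nat set" and l :: real and v :: nat
  assumes cut: "P \<union> Q = W" "P \<inter> Q = {}"
    and cut_value: "\<And>p q. p \<in> P \<Longrightarrow> q \<in> Q \<Longrightarrow> A p q = l"
    and W: "W \<subseteq> {0..<n}" and v: "v < n" "v \<notin> W"
    and no_small: "\<And>Z. Z \<subseteq> insert v W \<Longrightarrow> card Z = 3 \<or> card Z = 4 \<Longrightarrow> \<not> indecomposable_on Z"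
begin

lemma cut_value_rev:
  assumes "p \<in> P" "q \<in> Q" shows "A q p = 1 - l"
proof -
  have "p < n" "q < n" "p \<noteq> q" using assms cut W by auto
  then show ?thesis using skew[of p q] cut_value[OF assms] by simp
qed

lemma cut_apex:
  assumes p: "p \<in> P" "A p v \<noteq> l" and q: "q \<in> Q" "A v q \<noteq> l"
  shows "A v p = A v q"
proof (rule ccontr)
  assume ne: "A v p \<noteq> A v q"
  have d: "distinct [v, p, q]" using p q cut v by auto
  have "A q v = 1 - A v q" using skew[of v q] d q cut W v by auto
  then have "indecomposable_on {v, p, q}"
    using d ne p q cut_value[OF p(1) q(1)] cut_value_rev[OF p(1) q(1)]
    by (intro indecomposable_on_3I) auto
  moreover have "{v, p, q} \<subseteq> insert v W" "card {v, p, q} = 3" using p q cut d by auto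
  ultimately show False using no_small by blast
qed

lemma cut_right_block:
  assumes p: "p \<in> P" "A p v \<noteq> l" and u: "u \<in> Q" "A v u \<noteq> l" and q: "q \<in> Q" "A v q = l"
  shows "A u q = l"
proof (rule ccontr)
  assume ne: "A u q \<noteq> l"
  have d: "distinct [v, p, u, q]" using p u q ne cut v by auto
  have lt: "v < n" "p < n" "u < n" "q < n" using p u q cut W v by auto
  have "A v p = A v u" using cut_apex p u by blast
  moreover have "A p v = 1 - A v p" "A u v = 1 - A v u" "A q v = 1 - l" "A q u = 1 - A u q"
    using skew[of v p] skew[of v u] skew[of v q] skew[of u q] lt d q(2) by auto
  ultimately have "indecomposable_on {v, p, u, q}"
    using d ne p u q cut_value[OF p(1) u(1)] cut_value[OF p(1) q(1)]
      cut_value_rev[OF p(1) u(1)] cut_value_rev[OF p(1) q(1)]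
    by (intro indecomposable_on_4I) auto
  moreover have "{v, p, u, q} \<subseteq> insert v W" "card {v, p, u, q} = 4" using p u q cut d by auto
  ultimately show False using no_small by blast
qed

lemma cut_left_block:
  assumes q: "q \<in> Q" "A v q \<noteq> l" and u: "u \<in> P" "A u v \<noteq> l" and p: "p \<in> P" "A p v = l"
  shows "A p u = l"
proof (rule ccontr)
  assume ne: "A p u \<noteq> l"
  have d: "distinct [v, u, q, p]" using p u q ne cut v by auto
  have lt: "v < n" "p < n" "u < n" "q < n" using p u q cut W v by auto
  have "A v u = A v q" using cut_apex u q by blast
  moreover have "A u v = 1 - A v u" "A q v = 1 - A v q" "A v p = 1 - l" "A u p = 1 - A p u"
    using skew[of v u] skew[of v q] skew[of p v] skew[of p u] lt d p(2) by auto
  ultimately have "indecomposable_on {v, u, q, p}"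
    using d ne p u q cut_value[OF u(1) q(1)] cut_value[OF p(1) q(1)]
      cut_value_rev[OF u(1) q(1)] cut_value_rev[OF p(1) q(1)]
    by (intro indecomposable_on_4I) auto
  moreover have "{v, u, q, p} \<subseteq> insert v W" "card {v, u, q, p} = 4" using p u q cut d by auto
  ultimately show False using no_small by blast
qed

lemma constant_cut_insert_right:
  assumes p: "p \<in> P" "A p v \<noteq> l" and q: "q \<in> Q" "A v q = l"
  shows "constant_cut (insert v W) (insert v W - {q \<in> Q. A v q = l}) {q \<in> Q. A v q = l}"
proof (rule constant_cutI[where l = l])
  fix u q' assume u: "u \<in> insert v W - {q \<in> Q. A v q = l}" and q': "q' \<in> {q \<in> Q. A v q = l}"
  consider "u = v" | "u \<in> P" | "u \<in> Q" "A v u \<noteq> l" using u cut by auto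
  then show "A u q' = l" using q' cut_value[of u q'] cut_right_block[OF p, of u q'] by cases auto
qed (use p q cut v in auto)

lemma constant_cut_insert_left:
  assumes q: "q \<in> Q" "A v q \<noteq> l" and p: "p \<in> P" "A p v = l"
  shows "constant_cut (insert v W) {p \<in> P. A p v = l} (insert v W - {p \<in> P. A p v = l})"
proof (rule constant_cutI[where l = l])
  fix p' u assume p': "p' \<in> {p \<in> P. A p v = l}" and u: "u \<in> insert v W - {p \<in> P. A p v = l}"
  consider "u = v" | "u \<in> Q" | "u \<in> P" "A u v \<noteq> l" using u cut by auto
  then show "A p' u = l" using p' cut_value[of p' u] cut_left_block[OF q, of u p'] by cases auto
qed (use p q cut v in auto)

lemma constant_cut_insert_apex:
  assumes P: "p1 \<in> P" "\<forall>p\<in>P. A p v \<noteq> l" and Q: "q1 \<in> Q" "\<forall>q\<in>Q. A v q \<noteq> l"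
  shows "constant_cut (insert v W) {v} W"
proof (rule constant_cutI[where l = "A v q1"])
  fix v' w assume "v' \<in> {v}" "w \<in> W"
  moreover have "A v p1 = A v q1" using cut_apex P Q by blast
  moreover have "w \<in> P \<Longrightarrow> A v w = A v q1" "w \<in> Q \<Longrightarrow> A v p1 = A v w"
    using P Q cut_apex by blast+
  ultimately show "A v' w = A v q1" using cut by auto
qed (use cut v P in auto)

lemma constant_cut_insert:
  assumes "P \<noteq> {}" "Q \<noteq> {}"
  shows "\<exists>P' Q'. constant_cut (insert v W) P' Q'"
proof -
  have vPQ: "v \<notin> P" "v \<notin> Q" using cut v by auto
  consider "\<forall>p\<in>P. A p v = l" | "\<forall>q\<in>Q. A v q = l"
    | p q where "p \<in> P" "A p v \<noteq> l" "q \<in> Q" "A v q = l"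
    | p q where "q \<in> Q" "A v q \<noteq> l" "p \<in> P" "A p v = l"
    | "\<forall>p\<in>P. A p v \<noteq> l" "\<forall>q\<in>Q. A v q \<noteq> l"
    by blast
  then show ?thesis
  proof cases
    case 1
    have "constant_cut (insert v W) P (insert v Q)"
      using cut_value 1 by (intro constant_cutI[where l = l]) (use assms cut vPQ in auto)
    then show ?thesis by blast
  next
    case 2
    have "constant_cut (insert v W) (insert v P) Q"
      using cut_value 2 by (intro constant_cutI[where l = l]) (use assms cut vPQ in auto)
    then show ?thesis by blast
  next
    case 3
    then show ?thesis using constant_cut_insert_right by blast
  next
    case 4
    then show ?thesis using constant_cut_insert_left by blast
  next
    case 5
    then show ?thesis using constant_cut_insert_apex assms by blast
  qed
qed

end

lemma constant_cut_if_no_small_indecomposable: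
  assumes "finite Y" "Y \<subseteq> {0..<n}" "2 \<le> card Y"
    and "\<And>Z. Z \<subseteq> Y \<Longrightarrow> card Z = 3 \<or> card Z = 4 \<Longrightarrow> \<not> indecomposable_on Z"
  shows "\<exists>P Q. constant_cut Y P Q"
  using assms
proof (induction Y rule: finite_induct)
  case empty
  then show ?case by simp
next
  case (insert v W)
  show ?case
  proof (cases "card W \<le> 1")
    case True
    then obtain w where "W = {w}" "v \<noteq> w"
      using insert by (auto simp: card_Suc_eq le_Suc_eq)
    then have "constant_cut (insert v W) {v} W" unfolding constant_cut_def by auto
    then show ?thesis by blast
  next
    case False
    have "\<exists>P Q. constant_cut W P Q"
      using False insert.prems by (intro insert.IH) auto
    then obtain P Q l where "P \<union> Q = W" "P \<inter> Q = {}" "P \<noteq> {}" "Q \<noteq> {}"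
      "\<forall>p\<in>P. \<forall>q\<in>Q. A p q = l"
      by (auto simp: constant_cut_def)
    then show ?thesis
      using constant_cut_insert[of P Q W l v] insert by auto
  qed
qed

lemma constant_cut_clan_in:
  assumes "constant_cut Y P Q" "Y \<subseteq> {0..<n}"
  shows "clan_in Y P" "clan_in Y Q"
proof -
  obtain l where PQ: "P \<union> Q = Y" "P \<inter> Q = {}" and l: "\<forall>p\<in>P. \<forall>q\<in>Q. A p q = l"
    using assms(1) unfolding constant_cut_def by blast
  have "A q p = 1 - l" if "p \<in> P" "q \<in> Q" for p q
  proof -
    have "p < n" "q < n" "p \<noteq> q" using that PQ assms(2) by auto
    then show ?thesis using that l skew[of p q] by simp
  qed
  then show "clan_in Y P" "clan_in Y Q"
    using PQ l unfolding clan_in_def by auto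
qed

lemma indecomposable_on_small_subset:
  assumes "indecomposable_on {0..<n}" "3 \<le> n"
  shows "\<exists>Z\<subseteq>{0..<n}. (card Z = 3 \<or> card Z = 4) \<and> indecomposable_on Z"
proof (rule ccontr)
  assume "\<not> ?thesis"
  then have "\<exists>P Q. constant_cut {0..<n} P Q"
    using assms(2) by (intro constant_cut_if_no_small_indecomposable) auto
  then obtain P Q where cut: "constant_cut {0..<n} P Q" by blast
  then have PQ: "P \<union> Q = {0..<n}" "P \<inter> Q = {}" "P \<noteq> {}" "Q \<noteq> {}"
    unfolding constant_cut_def by blast+
  then have "card P + card Q = n"
    using card_Un_disjoint[of P Q] finite_Un[of P Q] by simp
  then have "2 \<le> card P \<or> 2 \<le> card Q" using assms(2) by linarith
  then have "P = {0..<n} \<or> Q = {0..<n}"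
    using indecomposable_onD[OF assms(1)] constant_cut_clan_in[OF cut] by blast
  then show False using PQ by blast
qed

lemma decomposable_insert_cases:
  assumes "finite X" "indecomposable_on X" "v \<notin> X" "\<not> indecomposable_on (insert v X)"
  shows "exterior X v \<or> (\<exists>s\<in>X. twin X s v)"
proof -
  obtain K where K: "clan_in (insert v X) K" "\<not> card K \<le> 1" "K \<noteq> insert v X"
    using assms(4) unfolding indecomposable_on_def by blast
  have fin: "finite K"
    using K(1) assms(1) unfolding clan_in_def by (meson finite_insert finite_subset)
  have "card (K \<inter> X) \<le> 1 \<or> K \<inter> X = X"
    using assms(2) clan_in_restrict[OF K(1), of X] unfolding indecomposable_on_def by blast
  then show ?thesis
  proof
    assume "K \<inter> X = X"
    then have "v \<notin> K" using K(1,3) unfolding clan_in_def by blast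
    then have "exterior X v" unfolding exterior_def using clan_inD[OF K(1)] \<open>K \<inter> X = X\<close> by blast
    then show ?thesis ..
  next
    assume small: "card (K \<inter> X) \<le> 1"
    then have "v \<in> K" using K(1,2) unfolding clan_in_def by (metis Int_absorb2 subset_insert)
    obtain s where s: "s \<in> K" "s \<noteq> v"
      using K(2) \<open>v \<in> K\<close> by (metis card_le_Suc0_iff_eq fin One_nat_def)
    have "s \<in> X" using s K(1) unfolding clan_in_def by blast
    have "w \<notin> K" if "w \<in> X - {s}" for w
      using that s \<open>s \<in> X\<close> small fin card_le_Suc0_iff_eq[of "K \<inter> X"] by auto
    then have "twin X s v" unfolding twin_def using clan_inD[OF K(1) s(1) \<open>v \<in> K\<close>] by blast
    then show ?thesis using \<open>s \<in> X\<close> by blast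
  qed
qed

lemma twin_unique:
  assumes "indecomposable_on X" "3 \<le> card X" "s \<in> X" "t \<in> X" "twin X s v" "twin X t v"
  shows "s = t"
proof (rule ccontr)
  assume "s \<noteq> t"
  have "clan_in X {s, t}"
    using assms(3-6) unfolding clan_in_def twin_def by auto
  then have "{s, t} = X" using indecomposable_onD[OF assms(1)] \<open>s \<noteq> t\<close> by simp
  then show False using assms(2) \<open>s \<noteq> t\<close> by auto
qed

lemma not_exterior_if_twin:
  assumes X: "X \<subseteq> {0..<n}" "indecomposable_on X" "3 \<le> card X"
    and v: "v < n" "v \<notin> X" and s: "s \<in> X" "twin X s v"
  shows "\<not> exterior X v"
proof
  assume ext: "exterior X v"
  have sv: "A s u = A v u" if "u \<in> X - {s}" for u
  proof -
    have "u < n" "s < n" "u \<noteq> s" "u \<noteq> v" using that s X v by auto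
    then show ?thesis using s(2) that v(1) skew[of u s] skew[of u v] unfolding twin_def by auto
  qed
  then have "clan_in X (X - {s})" unfolding clan_in_def
  proof (intro conjI ballI)
    fix i j k assume i: "i \<in> X - {s}" and j: "j \<in> X - {s}" and "k \<in> X - (X - {s})"
    then have "k = s" by blast
    moreover have "A v i = A v j" using ext i j unfolding exterior_def by blast
    ultimately show "A k i = A k j" using i j sv by simp
  qed blast
  moreover have "2 \<le> card (X - {s})" using X(3) s(1) by (simp add: card_Diff_singleton_if)
  ultimately show False using indecomposable_onD[OF X(2)] s by blast
qed

context
  fixes X :: "nat set" and s z y :: nat
  assumes X: "X \<subseteq> {0..<n}" "indecomposable_on X" "3 \<le> card X"
    and s: "s \<in> X" and z: "z < n" "z \<notin> X" "twin X s z"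
    and y: "y < n" "y \<notin> X" "\<not> twin X s y" "A y s \<noteq> A y z"
begin

lemma twin_pair_clan_covering:
  assumes K: "clan_in (insert z (insert y X)) K" and "X \<subseteq> K"
  shows "K = insert z (insert y X)"
proof -
  have "z \<in> K"
  proof (rule ccontr)
    assume "z \<notin> K"
    then have "exterior X z"
      unfolding exterior_def using clan_inD[OF K] \<open>X \<subseteq> K\<close> by blast
    then show False using not_exterior_if_twin[OF X z(1,2) s z(3)] by blast
  qed
  moreover have "y \<in> K"
    using clan_inD[OF K, of s z y] \<open>z \<in> K\<close> s \<open>X \<subseteq> K\<close> y(4) by blast
  ultimately show ?thesis using K \<open>X \<subseteq> K\<close> unfolding clan_in_def by blast
qed

context
  fixes K :: "nat set"
  assumes K: "clan_in (insert z (insert y X)) K" and small: "card (K \<inter> X) \<le> 1"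
begin

lemma small_clan_finite: "finite K"
proof -
  have "finite X" using X(1) by (rule finite_subset) simp
  moreover have "K \<subseteq> insert z (insert y X)" using K by (simp add: clan_in_def)
  ultimately show ?thesis using finite_subset by auto
qed

lemma small_clan_unique: "a \<in> K \<inter> X \<Longrightarrow> b \<in> K \<inter> X \<Longrightarrow> a = b"
  using small small_clan_finite card_le_Suc0_iff_eq[of "K \<inter> X"] by auto

lemma small_clan_twin: "r \<in> K \<inter> X \<Longrightarrow> w \<in> K \<Longrightarrow> twin X r w"
  unfolding twin_def using small_clan_unique clan_inD[OF K, of r w] by blast

lemma small_clan_not_both: "\<not> (z \<in> K \<and> y \<in> K)"
proof
  assume zy: "z \<in> K \<and> y \<in> K"
  have "A w s = A w y" if "w \<in> X - {s}" for w
  proof (cases "w \<in> K")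
    case True
    then have "w = s"
      using twin_unique[OF X(2,3) _ s _ z(3), of w] small_clan_twin[of w z] that zy by blast
    then show ?thesis using that by blast
  next
    case False
    then show ?thesis using that z(3) clan_inD[OF K, of z y w] zy unfolding twin_def by auto
  qed
  then show False using y(3) unfolding twin_def by blast
qed

lemma small_clan_z_only: "z \<in> K \<Longrightarrow> y \<notin> K \<Longrightarrow> K \<inter> X = {}"
proof -
  assume zy: "z \<in> K" "y \<notin> K"
  have "r = s" if "r \<in> K \<inter> X" for r
    using twin_unique[OF X(2,3) _ s _ z(3), of r] small_clan_twin[of r z] that zy(1) by blast
  then show ?thesis using clan_inD[OF K, of s z y] zy y(4) by blast
qed

lemma small_clan_y_only: "z \<notin> K \<Longrightarrow> y \<in> K \<Longrightarrow> K \<inter> X = {}"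
proof (rule ccontr)
  assume zy: "z \<notin> K" "y \<in> K" and "K \<inter> X \<noteq> {}"
  then obtain r where r: "r \<in> K \<inter> X" by blast
  have "twin X r y" using small_clan_twin r zy by blast
  then have "r \<noteq> s" using y(3) by blast
  have lt: "r < n" "s < n" using r s X(1) by auto
  have ne: "s \<noteq> y" "z \<noteq> r" "z \<noteq> y" using r s y(2) z(2) zy by auto
  have "A z r = A z y" using clan_inD[OF K, of r y z] r zy by blast
  moreover have "A s r = A s y" using \<open>twin X r y\<close> s \<open>r \<noteq> s\<close> unfolding twin_def by blast
  moreover have "A r s = A r z" using z(3) r \<open>r \<noteq> s\<close> unfolding twin_def by blast
  ultimately have "A y s = A y z"
    using skew[of s r] skew[of s y] skew[of z r] skew[of z y] lt ne y(1) z(1) \<open>r \<noteq> s\<close> by auto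
  then show False using y(4) by blast
qed

lemma twin_pair_clan_small: "card K \<le> 1"
proof -
  have "K \<subseteq> {z} \<or> K \<subseteq> {y} \<or> K \<subseteq> K \<inter> X"
    using small_clan_not_both small_clan_z_only small_clan_y_only K unfolding clan_in_def by blast
  then show ?thesis
    using small_clan_unique small_clan_finite card_le_Suc0_iff_eq[of K]
    by (auto simp: subset_singleton_iff)
qed

end

lemma indecomposable_on_insert_twin_pair: "indecomposable_on (insert z (insert y X))"
  unfolding indecomposable_on_def
proof (intro allI impI)
  fix K assume K: "clan_in (insert z (insert y X)) K"
  have "card (K \<inter> X) \<le> 1 \<or> K \<inter> X = X"
    using X(2) clan_in_restrict[OF K, of X] unfolding indecomposable_on_def by blast
  then show "card K \<le> 1 \<or> K = insert z (insert y X)"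
    using twin_pair_clan_small[OF K] twin_pair_clan_covering[OF K] by blast
qed

end

text \<open>Some \<open>k\<close> outside \<open>X\<close> is a twin of some \<open>s \<in> X\<close>. The set of \<open>s\<close> and all its outside twins
  is not a clan, so a vertex \<open>y\<close> separates \<open>s\<close> from one of these twins \<open>z\<close>; adding \<open>y\<close> and \<open>z\<close> works.\<close>
lemma indecomposable_on_two_point_extension:
  assumes V: "indecomposable_on {0..<n}"
    and X: "X \<subseteq> {0..<n}" "indecomposable_on X" "3 \<le> card X" "X \<noteq> {0..<n}"
    and none: "\<forall>v\<in>{0..<n} - X. \<not> indecomposable_on (insert v X)"
  shows "\<exists>z y. z \<in> {0..<n} - X \<and> y \<in> {0..<n} - X \<and> z \<noteq> y \<and>
    indecomposable_on (insert z (insert y X))"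
proof -
  have finX: "finite X" using X(1) by (rule finite_subset) simp
  have "\<not> clan_in {0..<n} X"
    using indecomposable_onD[OF V, of X] X(3,4) by auto
  then obtain k where k: "k \<in> {0..<n} - X" "\<not> exterior X k"
    using X(1) unfolding clan_in_def exterior_def by blast
  then obtain s where s: "s \<in> X" "twin X s k"
    using decomposable_insert_cases[OF finX X(2)] none by blast
  define K where "K = insert s {u \<in> {0..<n} - X. twin X s u}"
  have sK: "s \<in> K" and kK: "k \<in> K" and KV: "K \<subseteq> {0..<n}"
    using k s X(1) by (auto simp: K_def)
  have "2 \<le> card (X - {s})" using X(3) s(1) by (simp add: card_Diff_singleton_if)
  then obtain t where "t \<in> X - {s}" by (metis all_not_in_conv card.empty not_numeral_le_zero)
  then have t: "t \<in> X" "t \<notin> K" by (auto simp: K_def)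
  have "\<not> clan_in {0..<n} K"
  proof
    assume cK: "clan_in {0..<n} K"
    have "s \<noteq> k" using s k by blast
    then have "2 \<le> card K"
      using card_mono[OF finite_subset[OF KV finite_atLeastLessThan], of "{s, k}"] sK kK by simp
    then have "K = {0..<n}" using indecomposable_onD[OF V cK] by blast
    then show False using t X(1) by blast
  qed
  then obtain p q y where pq: "p \<in> K" "q \<in> K" and y: "y \<in> {0..<n}" "y \<notin> K" and "A y p \<noteq> A y q"
    using KV unfolding clan_in_def by blast
  then obtain z where z: "z \<in> K" "A y s \<noteq> A y z" by metis
  then have zX: "z \<in> {0..<n} - X" "twin X s z" by (auto simp: K_def)
  have "y \<notin> X"
  proof
    assume "y \<in> X"
    moreover have "y \<noteq> s" using y sK by blast
    ultimately show False using zX(2) z(2) unfolding twin_def by blast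
  qed
  moreover have "\<not> twin X s y" using y \<open>y \<notin> X\<close> by (auto simp: K_def)
  ultimately have "indecomposable_on (insert z (insert y X))"
    using indecomposable_on_insert_twin_pair[OF X(1-3) s(1)] zX y z(2) by simp
  moreover have "z \<noteq> y" using z(1) y(2) by blast
  ultimately show ?thesis using zX(1) y(1) \<open>y \<notin> X\<close> by blast
qed

text \<open>Replacing \<open>s\<close> by its twin \<open>x\<close> is an isomorphism of the restricted tournaments.\<close>
lemma indecomposable_on_twin_swap:
  assumes X: "X \<subseteq> {0..<n}" "indecomposable_on X"
    and s: "s \<in> X" and x: "x < n" "x \<notin> X" "twin X s x"
  shows "indecomposable_on (insert x (X - {s}))"
  unfolding indecomposable_on_def
proof (intro allI impI)
  let ?X' = "insert x (X - {s})"
  define f where "f u = (if u = x then s else u)" for u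
  fix K assume K: "clan_in ?X' K"
  have iso: "A (f u) (f w) = A u w" if "u \<in> ?X'" "w \<in> ?X'" "u \<noteq> w" for u w
  proof -
    have "A w s = A w x" if "w \<in> X - {s}" for w using x(3) that unfolding twin_def by blast
    moreover have "A s w = 1 - A w s" "A x w = 1 - A w x" if "w \<in> X - {s}" for w
    proof -
      have "w < n" "s < n" "w \<noteq> x" using that s X(1) x(2) by auto
      then show "A s w = 1 - A w s" "A x w = 1 - A w x"
        using that skew[of w s] skew[of w x] x(1) by auto
    qed
    ultimately show ?thesis using that unfolding f_def by auto
  qed
  have inj: "inj_on f ?X'" and image: "f ` ?X' = X"
    using s x(2) unfolding f_def inj_on_def by auto
  have Ksub: "K \<subseteq> ?X'" using K unfolding clan_in_def by blast
  have "clan_in X (f ` K)" unfolding clan_in_def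
  proof (intro conjI ballI)
    show "f ` K \<subseteq> X" using image_mono[OF Ksub, of f] image by simp
    fix i' j' k' assume i'j': "i' \<in> f ` K" "j' \<in> f ` K" and k': "k' \<in> X - f ` K"
    obtain i j where ij: "i \<in> K" "j \<in> K" "i' = f i" "j' = f j" using i'j' by blast
    obtain k where k: "k \<in> ?X'" "k' = f k" using k' image by (metis DiffD1 imageE)
    have "k \<notin> K" using k' ij k by blast
    then have "i \<in> ?X'" "j \<in> ?X'" "k \<noteq> i" "k \<noteq> j" using Ksub ij by auto
    then show "A k' i' = A k' j'"
      using iso[of k i] iso[of k j] clan_inD[OF K, of i j k] ij k \<open>k \<notin> K\<close> by simp
  qed
  then have "card (f ` K) \<le> 1 \<or> f ` K = X" using X(2) unfolding indecomposable_on_def by blast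
  moreover have "card (f ` K) = card K" using card_image inj_on_subset[OF inj Ksub] by blast
  moreover have "f ` K = X \<Longrightarrow> K = ?X'"
    using image inj Ksub by (metis inj_on_image_eq_iff order_refl)
  ultimately show "card K \<le> 1 \<or> K = ?X'" by auto
qed

lemma indecomposable_on_all:
  assumes "indecomposable n A"
  shows "indecomposable_on {0..<n}"
  unfolding indecomposable_on_def
proof (intro allI impI)
  fix K assume K: "clan_in {0..<n} K"
  have "A i k = A j k" if "i \<in> K" "j \<in> K" "k \<in> {0..<n} - K" for i j k
  proof -
    have "i < n" "j < n" "k < n" "k \<noteq> i" "k \<noteq> j" using that K unfolding clan_in_def by auto
    then show ?thesis using skew[of k i] skew[of k j] clan_inD[OF K that(1,2)] that(3) by simp
  qed
  then have "is_clan n A K" using K unfolding is_clan_def clan_in_def by blast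
  then show "card K \<le> 1 \<or> K = {0..<n}" using assms unfolding indecomposable_def by blast
qed

end

section \<open>Generalized tournaments with the same principal minors\<close>

locale same_principal_minors =
  generalized_tournament n A + B: generalized_tournament n B for n A B +
  assumes minors_eq: "\<forall>S. S \<subseteq> {0..<n} \<and> S \<noteq> {} \<longrightarrow> principal_minor A S = principal_minor B S"
begin

definition coincide :: "bool \<Rightarrow> nat \<Rightarrow> nat \<Rightarrow> bool" where
  "coincide e i j \<longleftrightarrow> B i j = (if e then A i j else A j i)"

definition coincide_on :: "bool \<Rightarrow> nat set \<Rightarrow> bool" where
  "coincide_on e Y \<longleftrightarrow> (\<forall>i\<in>Y. \<forall>j\<in>Y. coincide e i j)"

definition coherent :: "nat set \<Rightarrow> bool" where
  "coherent Y \<longleftrightarrow> (\<exists>e. coincide_on e Y)"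

lemma coincide_refl: "i < n \<Longrightarrow> coincide e i i"
  by (simp add: coincide_def diag B.diag)

lemma coincide_commute:
  assumes "i < n" "j < n" shows "coincide e j i \<longleftrightarrow> coincide e i j"
proof (cases "i = j")
  case False
  then show ?thesis using assms skew[of i j] B.skew[of i j] by (cases e) (auto simp: coincide_def)
qed simp

lemma coincide_cases:
  assumes "i < n" "j < n" shows "coincide e i j \<or> coincide (\<not> e) i j"
proof (cases "i = j")
  case True
  then show ?thesis using assms coincide_refl by simp
next
  case False
  have "principal_minor A {i, j} = principal_minor B {i, j}" using minors_eq assms by auto
  then have "A i j * A j i = B i j * B j i"
    using False assms by (simp add: principal_minor_2 diag B.diag)
  moreover have Aji: "A j i = 1 - A i j" and "B j i = 1 - B i j"
    using skew B.skew assms False by blast+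
  ultimately have "(B i j - A i j) * (B i j - (1 - A i j)) = 0" by (simp add: algebra_simps)
  then show ?thesis unfolding coincide_def Aji by (cases e) auto
qed

lemma coincide_symmetric_entry: "A i j = A j i \<Longrightarrow> coincide e i j \<longleftrightarrow> coincide e' i j"
  by (cases e; cases e') (auto simp: coincide_def)

lemma coincide_both: "coincide e i j \<Longrightarrow> coincide (\<not> e) i j \<Longrightarrow> A i j = A j i"
  by (cases e) (auto simp: coincide_def)

lemma not_coincide:
  assumes "i < n" "j < n" "\<not> coincide e i j"
  shows "coincide (\<not> e) i j" "A i j \<noteq> A j i"
  using coincide_cases[OF assms(1,2), of e] coincide_symmetric_entry[of i j e "\<not> e"] assms(3)
  by auto

lemma coincide_not_iff:
  "i < n \<Longrightarrow> j < n \<Longrightarrow> A i j \<noteq> A j i \<Longrightarrow> coincide (\<not> e) i j \<longleftrightarrow> \<not> coincide e i j"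
  using coincide_cases[of i j e] coincide_both[of e i j] by blast

text \<open>The only use of the principal minors of order 3: a triangle on which \<open>B\<close> follows \<open>A\<close> on
  two sides and \<open>A\<^sup>t\<close> on the third is degenerate.\<close>
lemma coincide_triangle:
  assumes lt: "i < n" "j < n" "k < n" and d: "i \<noteq> j" "i \<noteq> k" "j \<noteq> k"
    and c: "coincide e i j" "coincide e i k" "coincide (\<not> e) j k"
  shows "A j k = A k j \<or> A i j = A i k"
proof -
  have "principal_minor A {i, j, k} = principal_minor B {i, j, k}" using minors_eq lt by auto
  then have eq: "A i j * A j k * A k i + A i k * A j i * A k j =
      B i j * B j k * B k i + B i k * B j i * B k j"
    using d lt by (simp add: principal_minor_3 diag B.diag algebra_simps)
  have a: "A j i = 1 - A i j" "A k i = 1 - A i k" "A k j = 1 - A j k" using skew lt d by metis+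
  have b: "B j i = 1 - B i j" "B k i = 1 - B i k" "B k j = 1 - B j k" using B.skew lt d by metis+
  let ?d = "(A i j * A j k * A k i + A i k * A j i * A k j) -
    (B i j * B j k * B k i + B i k * B j i * B k j)"
  have "?d = (2 * A j k - 1) * (A i j - A i k)"
  proof (cases e)
    case True
    then have "B i j = A i j" "B i k = A i k" "B j k = 1 - A j k" "B j i = 1 - A i j"
      "B k i = 1 - A i k" "B k j = A j k"
      using c a b by (auto simp: coincide_def)
    note bv = this
    show ?thesis unfolding bv a by (simp add: algebra_simps)
  next
    case False
    then have "B i j = 1 - A i j" "B i k = 1 - A i k" "B j k = A j k" "B j i = A i j"
      "B k i = A i k" "B k j = 1 - A j k"
      using c a b by (auto simp: coincide_def)
    note bv = this
    show ?thesis unfolding bv a by (simp add: algebra_simps)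
  qed
  then have "(2 * A j k - 1) * (A i j - A i k) = 0" using eq by simp
  then show ?thesis using a by auto
qed


lemma coincide_on_insert:
  assumes "S \<subseteq> {0..<n}" "v < n" "coincide_on e S" "\<forall>s\<in>S. coincide e v s"
  shows "coincide_on e (insert v S)"
  unfolding coincide_on_def
proof (intro ballI)
  fix i j assume "i \<in> insert v S" "j \<in> insert v S"
  then show "coincide e i j"
    using assms coincide_refl coincide_commute[of v] unfolding coincide_on_def by auto
qed

lemma coincide_on_triangle:
  assumes "i < n" "j < n" "k < n" "coincide e i j" "coincide e i k" "coincide e j k"
  shows "coincide_on e {i, j, k}"
  using assms coincide_refl coincide_commute unfolding coincide_on_def by auto

lemma not_coherent_triangle:
  assumes "\<not> coherent {i, j, k}" "i < n" "j < n" "k < n"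
  shows "\<not> (coincide e i j \<and> coincide e i k \<and> coincide e j k)"
  using assms coincide_on_triangle[of i j k e] unfolding coherent_def by blast

lemma coincide_mismatch:
  assumes S: "S \<subseteq> {0..<n}" "coincide_on e S" and v: "v < n" "v \<notin> S"
    and s: "s \<in> S" "\<not> coincide e v s" and t: "t \<in> S" "coincide e v t"
  shows "A t v = A t s"
proof -
  have lt: "s < n" "t < n" using S s t by auto
  have "t \<noteq> s" "t \<noteq> v" "v \<noteq> s" using s t v by auto
  moreover have "coincide e t v" using coincide_commute[OF v(1) lt(2)] t(2) by simp
  moreover have "coincide e t s" using S(2) s(1) t(1) unfolding coincide_on_def by blast
  ultimately show ?thesis
    using coincide_triangle[of t v s e] not_coincide[OF v(1) lt(1) s(2)] lt v(1) by auto
qed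

context
  fixes S :: "nat set" and e :: bool and v :: nat
  assumes S: "S \<subseteq> {0..<n}" "coincide_on e S" and v: "v < n" "v \<notin> S"
    and reversed: "\<forall>s\<in>S. \<not> coincide e v s"
begin

lemma reversed_half:
  assumes "k \<in> S" "c \<in> S" "A v k \<noteq> A v c"
  shows "A k c = 1/2"
proof -
  have lt: "k < n" "c < n" and "k \<noteq> c" using assms S(1) by auto
  have "A k c = A c k"
  proof (rule ccontr)
    assume "A k c \<noteq> A c k"
    moreover have "coincide e k c" using S(2) assms unfolding coincide_on_def by blast
    moreover have "coincide (\<not> e) v k" "coincide (\<not> e) v c"
      using not_coincide(1)[OF v(1)] lt reversed assms by auto
    ultimately have "A v k = A v c"
      using coincide_triangle[of v k c "\<not> e"] lt v \<open>k \<noteq> c\<close> assms by auto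
    then show False using assms(3) by blast
  qed
  then show ?thesis using skew[OF lt \<open>k \<noteq> c\<close>] by simp
qed

lemma reversed_level_clan:
  assumes "c \<in> S"
  shows "clan_in (insert v S) {c' \<in> S. A v c' = A v c}"
  unfolding clan_in_def
proof (intro conjI ballI)
  fix a b k assume a: "a \<in> {c' \<in> S. A v c' = A v c}" and b: "b \<in> {c' \<in> S. A v c' = A v c}"
    and k: "k \<in> insert v S - {c' \<in> S. A v c' = A v c}"
  show "A k a = A k b"
  proof (cases "k = v")
    case False
    then have "k \<in> S" "A v k \<noteq> A v a" "A v k \<noteq> A v b" using a b k by auto
    then show ?thesis using reversed_half[of k a] reversed_half[of k b] a b by simp
  qed (use a b in auto)
qed auto


text \<open>If \<open>v\<close> disagrees with the mode on every vertex, indecomposability forces every pair of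
  \<open>S\<close> to be symmetric (both entries \<open>1/2\<close>), so the opposite mode fits on all of \<open>insert v S\<close>.\<close>
lemma coincide_on_reversed_insert:
  assumes Y: "indecomposable_on (insert v S)"
  shows "coincide_on (\<not> e) (insert v S)"
proof -
  have sym: "A s s' = A s' s" if "s \<in> S" "s' \<in> S" for s s'
  proof (rule ccontr)
    let ?C = "{c \<in> S. A v c = A v s}"
    assume asym: "A s s' \<noteq> A s' s"
    have lt2: "s < n" "s' < n" "s \<noteq> s'" using that asym S by auto
    have "A v s' = A v s"
    proof (rule ccontr)
      assume "A v s' \<noteq> A v s"
      then have "A s s' = 1/2" using reversed_half[of s s'] that by simp
      then show False using asym skew[OF lt2] by simp
    qed
    then have "{s, s'} \<subseteq> ?C" using that by auto
    moreover have "finite ?C" using finite_subset[OF S(1)] by simp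
    ultimately have "2 \<le> card ?C" using lt2(3) card_mono[of ?C "{s, s'}"] by auto
    then have "?C = insert v S" using indecomposable_onD[OF Y] reversed_level_clan that by blast
    then have "v \<in> ?C" by (metis insertI1)
    then show False using v(2) by blast
  qed
  have "coincide_on (\<not> e) S"
    using S(2) sym coincide_symmetric_entry unfolding coincide_on_def by blast
  moreover have "\<forall>s\<in>S. coincide (\<not> e) v s"
  proof
    fix s assume "s \<in> S"
    then show "coincide (\<not> e) v s" using not_coincide(1)[OF v(1), of s e] reversed S(1) by auto
  qed
  ultimately show ?thesis using coincide_on_insert[OF S(1) v(1)] by blast
qed
end

lemma coherent_if_coincide_on_Diff:
  assumes Y: "Y \<subseteq> {0..<n}" "indecomposable_on Y" and v: "v \<in> Y"
    and e: "coincide_on e (Y - {v})"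
  shows "coherent Y"
proof -
  let ?S = "Y - {v}"
  define D where "D = {s \<in> ?S. \<not> coincide e v s}"
  have S: "?S \<subseteq> {0..<n}" and lt: "v < n" and vY: "insert v ?S = Y" using Y v by auto
  have vS: "v \<notin> ?S" by blast
  have "clan_in Y (insert v D)" unfolding clan_in_def
  proof (intro conjI ballI)
    fix i j k assume "i \<in> insert v D" "j \<in> insert v D" and k: "k \<in> Y - insert v D"
    moreover have "A k u = A k v" if "u \<in> insert v D" for u
    proof (cases "u = v")
      case False
      then have "u \<in> ?S" "\<not> coincide e v u" using that by (auto simp: D_def)
      moreover have "k \<in> ?S" "coincide e v k" using k by (auto simp: D_def)
      ultimately show ?thesis using coincide_mismatch[OF S e lt vS, of u k] by simp
    qed simp
    ultimately show "A k i = A k j" by metis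
  qed (use v in \<open>auto simp: D_def\<close>)
  then have "card (insert v D) \<le> 1 \<or> insert v D = Y"
    using Y(2) unfolding indecomposable_on_def by blast
  then show ?thesis
  proof
    assume "card (insert v D) \<le> 1"
    moreover have "finite Y" using Y(1) by (rule finite_subset) simp
    then have "finite D" "v \<notin> D" using finite_subset[of D Y] unfolding D_def by auto
    ultimately have "D = {}" by simp
    then have "coincide_on e (insert v ?S)"
      using coincide_on_insert[OF S lt e] unfolding D_def by blast
    then show ?thesis unfolding coherent_def vY by blast
  next
    assume "insert v D = Y"
    then have "\<forall>s\<in>?S. \<not> coincide e v s" unfolding D_def by blast
    then have "coincide_on (\<not> e) (insert v ?S)"
      using coincide_on_reversed_insert[OF S e lt vS] Y(2) vY by simp
    then show ?thesis unfolding coherent_def vY by blast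
  qed
qed

lemma exterior_if_reversed:
  assumes X: "X \<subseteq> {0..<n}" "indecomposable_on X" "3 \<le> card X" "coincide_on e X"
    and v: "v < n" "v \<notin> X" and reversed: "\<forall>s\<in>X. \<not> coincide e v s"
  shows "exterior X v"
proof -
  obtain s0 where s0: "s0 \<in> X" using X(3) by fastforce
  let ?C = "{c \<in> X. A v c = A v s0}"
  have "clan_in X ?C"
    using clan_in_restrict[OF reversed_level_clan[OF X(1,4) v reversed s0], of X]
    by (simp add: Int_absorb2 subset_insertI)
  then have "card ?C \<le> 1 \<or> ?C = X" using X(2) unfolding indecomposable_on_def by blast
  then show ?thesis
  proof
    assume "?C = X"
    then show ?thesis unfolding exterior_def by (metis (mono_tags, lifting) mem_Collect_eq)
  next
    assume "card ?C \<le> 1"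
    moreover have "finite ?C" using finite_subset[OF X(1)] by simp
    ultimately have C: "?C = {s0}" using s0 card_le_Suc0_iff_eq by fastforce
    have half: "A s0 u = 1/2" if "u \<in> X - {s0}" for u
    proof -
      have "A v u \<noteq> A v s0" using that C by blast
      then have "A u s0 = 1/2" using reversed_half[OF X(1,4) v reversed, of u s0] that s0 by simp
      moreover have "u < n" "s0 < n" "u \<noteq> s0" using that s0 X(1) by auto
      ultimately show ?thesis using skew[of u s0] by simp
    qed
    have "clan_in X (X - {s0})" unfolding clan_in_def
    proof (intro conjI ballI)
      fix i j k assume "i \<in> X - {s0}" "j \<in> X - {s0}" "k \<in> X - (X - {s0})"
      then show "A k i = A k j" using half[of i] half[of j] by simp
    qed auto
    moreover have "2 \<le> card (X - {s0})" using X(3) s0 by (simp add: card_Diff_singleton_if)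
    ultimately show ?thesis using indecomposable_onD[OF X(2)] s0 by blast
  qed
qed

lemma coincide_insert_cases:
  assumes X: "X \<subseteq> {0..<n}" "indecomposable_on X" "3 \<le> card X" "coincide_on e X"
    and v: "v < n" "v \<notin> X"
  shows "(\<forall>s\<in>X. coincide e v s)
    \<or> (\<exists>s\<in>X. twin X s v \<and> \<not> coincide e v s \<and> (\<forall>w\<in>X - {s}. coincide e v w))
    \<or> (exterior X v \<and> (\<forall>s\<in>X. \<not> coincide e v s))"
proof -
  define D where "D = {s \<in> X. \<not> coincide e v s}"
  have "clan_in X D" unfolding clan_in_def
  proof (intro conjI ballI)
    fix i j k assume "i \<in> D" "j \<in> D" "k \<in> X - D"
    then have "A k v = A k i" "A k v = A k j"
      using coincide_mismatch[OF X(1,4) v, of i k] coincide_mismatch[OF X(1,4) v, of j k]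
      unfolding D_def by simp_all
    then show "A k i = A k j" by simp
  qed (auto simp: D_def)
  then have "card D \<le> 1 \<or> D = X" using X(2) unfolding indecomposable_on_def by blast
  moreover have "finite X" using X(1) by (rule finite_subset) simp
  then have "finite D" unfolding D_def by simp
  ultimately consider "D = {}" | s where "D = {s}" | "D = X"
    using card_1_singleton_iff[of D] by (cases "card D") auto
  then show ?thesis
  proof cases
    case 2
    then have "s \<in> X" "\<not> coincide e v s" "\<forall>w\<in>X - {s}. coincide e v w" unfolding D_def by blast+
    moreover have "twin X s v"
      unfolding twin_def using calculation coincide_mismatch[OF X(1,4) v] by auto
    ultimately show ?thesis by blast
  next
    case 3
    then have "\<forall>s\<in>X. \<not> coincide e v s" unfolding D_def by blast
    then show ?thesis using exterior_if_reversed[OF X v] by blast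
  qed (auto simp: D_def)
qed

context
  fixes X :: "nat set" and e :: bool and x y :: nat
  assumes X: "X \<subseteq> {0..<n}" "indecomposable_on X" "3 \<le> card X" "coincide_on e X"
    and x: "x < n" "x \<notin> X" and y: "y < n" "y \<notin> X" and "x \<noteq> y"
    and Z: "indecomposable_on (insert x (insert y X))"
begin

lemma not_common_twin:
  assumes "s \<in> X" "twin X s x" "twin X s y"
  shows False
proof -
  have "clan_in (insert x (insert y X)) {s, x, y}"
    using assms unfolding clan_in_def twin_def by auto
  moreover have "2 \<le> card {s, x, y}" using assms(1) x(2) by (auto simp: card_insert_if)
  ultimately have "{s, x, y} = insert x (insert y X)" using indecomposable_onD[OF Z] by blast
  then have "X \<subseteq> {s}" using x(2) y(2) by blast
  then show False using X(3) card_mono[of "{s}" X] by simp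
qed

lemma not_both_exterior: "exterior X x \<Longrightarrow> exterior X y \<Longrightarrow> False"
proof -
  assume "exterior X x" "exterior X y"
  then have "clan_in (insert x (insert y X)) X"
    unfolding clan_in_def exterior_def by blast
  then have "X = insert x (insert y X)" using indecomposable_onD[OF Z] X(3) by simp
  then show False using x(2) by blast
qed

text \<open>Swapping \<open>s\<close> for \<open>x\<close> gives a
  second indecomposable coherent set, and \<open>y\<close> cannot fit the cases of \<open>coincide_insert_cases\<close>
  over both sets at once.\<close>
context
  fixes s :: nat
  assumes s: "s \<in> X" "twin X s x" "\<not> coincide e x s" "\<forall>w\<in>X - {s}. coincide e x w"
begin

lemma coincide_insert_cases_swapped:
  "(\<forall>u\<in>insert x (X - {s}). coincide e y u)
    \<or> (\<exists>u\<in>insert x (X - {s}). \<forall>w\<in>insert x (X - {s}) - {u}. coincide e y w)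
    \<or> (exterior (insert x (X - {s})) y \<and> (\<forall>u\<in>insert x (X - {s}). \<not> coincide e y u))"
proof -
  let ?X' = "insert x (X - {s})"
  have "?X' \<subseteq> {0..<n}" using X(1) x(1) by auto
  moreover have "indecomposable_on ?X'" using indecomposable_on_twin_swap[OF X(1,2) s(1) x s(2)] .
  moreover have "3 \<le> card ?X'"
    using X(3) s(1) x(2) finite_subset[OF X(1)] by (simp add: card_Diff_singleton_if)
  moreover have "coincide_on e ?X'"
    using coincide_on_insert[of "X - {s}" x e] X(1,4) x(1) s(4) unfolding coincide_on_def by blast
  moreover have "y \<notin> ?X'" using y(2) \<open>x \<noteq> y\<close> by blast
  ultimately show ?thesis using coincide_insert_cases[of ?X' e y] y(1) by blast
qed

lemma other_twin_absurd:
  assumes s': "s' \<in> X" "s' \<noteq> s" "twin X s' y" "\<not> coincide e y s'" "\<forall>w\<in>X - {s'}. coincide e y w"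
  shows False
proof -
  have lt: "s < n" using s(1) X(1) by auto
  have ys: "coincide e y s" using s' s(1) by blast
  have ne: "A y s \<noteq> A y x"
  proof
    assume eq: "A y s = A y x"
    have "clan_in (insert x (insert y X)) {s, x}"
      using s(1,2) eq unfolding clan_in_def twin_def by auto
    moreover have "s \<noteq> x" using s(1) x(2) by blast
    then have "2 \<le> card {s, x}" by simp
    ultimately have "{s, x} = insert x (insert y X)" using indecomposable_onD[OF Z] by blast
    then have "y \<in> {s, x}" by (metis insertI1 insertI2)
    then show False using y(2) \<open>x \<noteq> y\<close> s(1) by blast
  qed
  have "\<not> coincide e y x"
  proof
    assume "coincide e y x"
    moreover have "coincide (\<not> e) s x" "A x s \<noteq> A s x"
      using not_coincide[OF x(1) lt s(3)] coincide_commute[OF x(1) lt] by auto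
    moreover have "y \<noteq> s" "s \<noteq> x" using s(1) x(2) y(2) by blast+
    ultimately show False
      using coincide_triangle[of y s x e] ys ne y(1) x(1) lt \<open>x \<noteq> y\<close> by auto
  qed
  moreover obtain w where "w \<in> X" "w \<noteq> s" "w \<noteq> s'"
    using card_ge_3_avoid_two[OF X(3)] by blast
  ultimately show False using coincide_insert_cases_swapped s' x(2) by blast
qed

lemma exterior_absurd:
  assumes "exterior X y" "\<forall>u\<in>X. \<not> coincide e y u"
  shows False
proof -
  obtain w1 where w1: "w1 \<in> X" "w1 \<noteq> s" using card_ge_3_avoid_two[OF X(3)] by blast
  obtain w2 where w2: "w2 \<in> X" "w2 \<noteq> s" "w2 \<noteq> w1" using card_ge_3_avoid_two[OF X(3)] by blast
  have w: "w1 \<in> X - {s}" "w2 \<in> X - {s}" "w1 \<noteq> w2" using w1 w2 by auto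
  consider "exterior (insert x (X - {s})) y" | "coincide e y w1 \<or> coincide e y w2"
    using coincide_insert_cases_swapped w by blast
  then show False
  proof cases
    case 1
    have "x \<in> insert x (X - {s})" "w1 \<in> insert x (X - {s})" using w1 by auto
    then have yx: "A y x = A y w1" using exteriorD[OF 1] by blast
    have row: "A y u = A y w1" if "u \<in> insert x X" for u
    proof (cases "u = x")
      case False
      then show ?thesis using exteriorD[OF assms(1), of u w1] that w1(1) by simp
    qed (use yx in simp)
    have "clan_in (insert x (insert y X)) (insert x X)" unfolding clan_in_def
    proof (intro conjI ballI)
      fix i j k assume "i \<in> insert x X" "j \<in> insert x X" "k \<in> insert x (insert y X) - insert x X"
      moreover from this have "k = y" by blast
      ultimately show "A k i = A k j" using row[of i] row[of j] by simp
    qed blast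
    then have "insert x X = insert x (insert y X)"
      using indecomposable_onD[OF Z] X(3) finite_subset[OF X(1)] x(2) by simp
    then have "y \<in> insert x X" by (metis insertI1 insertI2)
    then show False using y(2) \<open>x \<noteq> y\<close> by blast
  next
    case 2
    then show False using assms(2) w by blast
  qed
qed

end

lemma twin_excludes_mismatch:
  assumes s: "s \<in> X" "twin X s x" "\<not> coincide e x s" "\<forall>w\<in>X - {s}. coincide e x w"
    and "\<not> (\<forall>u\<in>X. coincide e y u)"
  shows False
proof -
  consider s' where "s' \<in> X" "twin X s' y" "\<not> coincide e y s'" "\<forall>w\<in>X - {s'}. coincide e y w"
    | "exterior X y" "\<forall>u\<in>X. \<not> coincide e y u"
    using coincide_insert_cases[OF X y] assms(5) by blast
  then show False
  proof cases
    case 1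
    then show False
      using not_common_twin[OF s(1,2)] other_twin_absurd[OF s] by (cases "s' = s") auto
  next
    case 2
    then show False using exterior_absurd[OF s] by blast
  qed
qed

end

lemma coherent_two_point_extension:
  assumes X: "X \<subseteq> {0..<n}" "indecomposable_on X" "3 \<le> card X" "coincide_on e X"
    and x: "x < n" "x \<notin> X" and y: "y < n" "y \<notin> X" and "x \<noteq> y"
    and Z: "indecomposable_on (insert x (insert y X))"
  shows "coherent (insert x (insert y X))"
proof -
  have Z': "indecomposable_on (insert y (insert x X))" using Z by (simp add: insert_commute)
  have Zn: "insert x (insert y X) \<subseteq> {0..<n}" using X(1) x(1) y(1) by auto
  consider "\<forall>u\<in>X. coincide e x u" | "\<forall>u\<in>X. coincide e y u"
    | "exterior X x" "exterior X y"
    using coincide_insert_cases[OF X x] coincide_insert_cases[OF X y]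
      twin_excludes_mismatch[OF X x y \<open>x \<noteq> y\<close> Z] twin_excludes_mismatch[OF X y x _ Z'] \<open>x \<noteq> y\<close>
    by metis
  then show ?thesis
  proof cases
    case 1
    then have "coincide_on e (insert x (insert y X) - {y})"
      using coincide_on_insert[OF X(1) x(1) X(4)] \<open>x \<noteq> y\<close> y(2) by (simp add: insert_Diff_if)
    then show ?thesis using coherent_if_coincide_on_Diff[OF Zn Z] by blast
  next
    case 2
    then have "coincide_on e (insert y (insert x X) - {x})"
      using coincide_on_insert[OF X(1) y(1) X(4)] \<open>x \<noteq> y\<close> x(2) by (simp add: insert_Diff_if)
    moreover have "insert y (insert x X) \<subseteq> {0..<n}" using Zn by blast
    ultimately have "coherent (insert y (insert x X))"
      using coherent_if_coincide_on_Diff[OF _ Z'] by blast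
    then show ?thesis by (simp add: insert_commute)
  next
    case 3
    then show ?thesis using not_both_exterior[OF X x y \<open>x \<noteq> y\<close> Z] by blast
  qed
qed

text \<open>Grow \<open>X\<close> by one or two vertices at a time, keeping it indecomposable and coherent.\<close>
lemma coherent_all_if_coherent_subset:
  assumes V: "indecomposable_on {0..<n}"
  shows "X \<subseteq> {0..<n} \<Longrightarrow> indecomposable_on X \<Longrightarrow> 3 \<le> card X \<Longrightarrow> coherent X \<Longrightarrow>
    coherent {0..<n}"
proof (induction "card ({0..<n} - X)" arbitrary: X rule: less_induct)
  case less
  then obtain e where e: "coincide_on e X" unfolding coherent_def by blast
  have finX: "finite X" using less.prems(1) by (rule finite_subset) simp
  have step: "coherent {0..<n}"
    if "Y \<subseteq> {0..<n}" "X \<subset> Y" "indecomposable_on Y" "coherent Y" for Y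
  proof -
    have "card ({0..<n} - Y) < card ({0..<n} - X)"
      using that less.prems(1) by (intro psubset_card_mono) auto
    moreover have "3 \<le> card Y"
      using less.prems(3) card_mono[OF finite_subset[OF that(1)] psubset_imp_subset[OF that(2)]]
      by simp
    ultimately show ?thesis using less.hyps that by blast
  qed
  show ?case
  proof (cases "X = {0..<n}")
    case True
    then show ?thesis using less.prems(4) by simp
  next
    case False
    show ?thesis
    proof (cases "\<exists>v\<in>{0..<n} - X. indecomposable_on (insert v X)")
      case True
      then obtain v where v: "v \<in> {0..<n} - X" "indecomposable_on (insert v X)" by blast
      have "coherent (insert v X)"
        using coherent_if_coincide_on_Diff[OF _ v(2), of v e] less.prems(1) v(1) e by auto
      then show ?thesis using step[of "insert v X"] less.prems(1) v by blast
    next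
      case none: False
      obtain z y where zy: "z \<in> {0..<n} - X" "y \<in> {0..<n} - X" "z \<noteq> y"
        and Z: "indecomposable_on (insert z (insert y X))"
        using indecomposable_on_two_point_extension[OF V less.prems(1-3) False] none by blast
      have "coherent (insert z (insert y X))"
        using coherent_two_point_extension[OF less.prems(1-3) e _ _ _ _ zy(3) Z] zy(1,2) by simp
      then show ?thesis using step[of "insert z (insert y X)"] less.prems(1) zy Z by blast
    qed
  qed
qed


lemma coherent_if_card_3:
  assumes Z: "Z \<subseteq> {0..<n}" "card Z = 3" "indecomposable_on Z"
  shows "coherent Z"
proof -
  obtain a b c where abc: "Z = {a, b, c}" "a \<noteq> b" "a \<noteq> c" "b \<noteq> c"
    using Z(2) card_3_iff by metis
  have lt: "b < n" "c < n" using Z(1) abc(1) by auto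
  obtain e where "coincide e b c" using coincide_cases[OF lt] by blast
  then have "coincide_on e (Z - {a})"
    using abc coincide_refl lt coincide_commute[OF lt] unfolding coincide_on_def by auto
  then show ?thesis using coherent_if_coincide_on_Diff[OF Z(1,3)] abc(1) by blast
qed

lemma asymmetric_if_not_coherent_triangle:
  assumes lt: "i < n" "j < n" "k < n" and d: "i \<noteq> j" "i \<noteq> k" "j \<noteq> k"
    and nc: "\<not> coherent {i, j, k}"
  shows "A i j \<noteq> A j i"
proof
  assume ij: "A i j = A j i"
  then have cij: "coincide e i j" for e
    using coincide_cases[OF lt(1,2), of True] coincide_symmetric_entry[OF ij] by blast
  have half: "A i j = 1/2" using ij skew[OF lt(1,2) d(1)] by simp
  have no_mono: "\<not> (coincide e i k \<and> coincide e j k)" for e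
    using nc coincide_on_triangle[OF lt cij] unfolding coherent_def by blast
  consider "coincide True i k" "coincide False j k" | "coincide False i k" "coincide True j k"
    using no_mono coincide_cases[OF lt(1,3), of True] coincide_cases[OF lt(2,3), of True] by auto
  then show False
  proof cases
    case 1
    then have "A j k \<noteq> A k j"
      using no_mono[of True] coincide_symmetric_entry[of j k False True] by blast
    then have "A i j = A i k" using coincide_triangle[OF lt d, of True] cij 1 by auto
    then have "A i k = A k i" using half skew[OF lt(1,3) d(2)] by simp
    then show False using no_mono[of False] coincide_symmetric_entry[of i k True False] 1 by blast
  next
    case 2
    then have "A i k \<noteq> A k i"
      using no_mono[of True] coincide_symmetric_entry[of i k False True] by blast
    moreover have "coincide True j i" using cij coincide_commute[OF lt(1,2)] by blast
    ultimately have "A j i = A j k"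
      using coincide_triangle[of j i k True] lt d 2 by auto
    then have "A j k = A k j" using half ij skew[OF lt(2,3) d(3)] by simp
    then show False using no_mono[of False] coincide_symmetric_entry[of j k True False] 2 by blast
  qed
qed

text \<open>The only use of the principal minors of order 4: on such a pattern the two minors differ by
  \<open>\<plusminus>(2a - 1)(2b - 1)(a - b)(a + b - 1)\<close>, and each factor yields a clan or contradicts asymmetry.\<close>
lemma path_pattern_decomposable:
  assumes lt: "p1 < n" "p2 < n" "p3 < n" "p4 < n" and d: "distinct [p1, p2, p3, p4]"
    and st: "A p1 p3 \<noteq> A p3 p1" "A p1 p2 \<noteq> A p2 p1" "A p2 p4 \<noteq> A p4 p2" "A p3 p4 \<noteq> A p4 p3"
    and c: "coincide e p1 p2" "coincide e p2 p3" "coincide e p3 p4"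
      "coincide (\<not> e) p1 p3" "coincide (\<not> e) p2 p4" "coincide (\<not> e) p1 p4"
  shows "\<not> indecomposable_on {p1, p2, p3, p4}"
proof
  assume Q: "indecomposable_on {p1, p2, p3, p4}"
  have dd: "p1 \<noteq> p2" "p1 \<noteq> p3" "p1 \<noteq> p4" "p2 \<noteq> p3" "p2 \<noteq> p4" "p3 \<noteq> p4" using d by auto
  have e1: "A p2 p1 = A p2 p3"
    using coincide_triangle[of p2 p1 p3 e] lt dd coincide_commute[OF lt(1,2)] c(1,2,4) st(1) by auto
  have e2: "A p3 p2 = A p3 p4"
    using coincide_triangle[of p3 p2 p4 e] lt dd coincide_commute[OF lt(2,3)] c(2,3,5) st(3) by auto
  have e3: "A p4 p1 = A p4 p2"
    using coincide_triangle[of p4 p1 p2 "\<not> e"] lt dd coincide_commute[OF lt(1,4)]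
      coincide_commute[OF lt(2,4)] c(1,5,6) st(2) by auto
  have e4: "A p1 p3 = A p1 p4"
    using coincide_triangle[of p1 p3 p4 "\<not> e"] lt dd c(3,4,6) st(4) by auto
  define a where "a = A p1 p2"
  define b where "b = A p1 p3"
  have vA: "A p1 p2 = a" "A p2 p1 = 1 - a" "A p2 p3 = 1 - a" "A p3 p2 = a" "A p3 p4 = a"
    "A p4 p3 = 1 - a" "A p1 p3 = b" "A p3 p1 = 1 - b" "A p1 p4 = b" "A p4 p1 = 1 - b"
    "A p4 p2 = 1 - b" "A p2 p4 = b"
    using skew[of p1 p2] skew[of p2 p3] skew[of p3 p4] skew[of p1 p3] skew[of p1 p4] skew[of p4 p2]
      e1 e2 e3 e4 lt dd unfolding a_def b_def by auto
  have vB': "B p2 p1 = 1 - B p1 p2" "B p3 p2 = 1 - B p2 p3" "B p4 p3 = 1 - B p3 p4"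
    "B p3 p1 = 1 - B p1 p3" "B p4 p2 = 1 - B p2 p4" "B p4 p1 = 1 - B p1 p4"
    using B.skew[of p1 p2] B.skew[of p2 p3] B.skew[of p3 p4] B.skew[of p1 p3] B.skew[of p2 p4]
      B.skew[of p1 p4] lt dd by auto
  have "principal_minor A {p1, p2, p3, p4} = principal_minor B {p1, p2, p3, p4}"
    using minors_eq lt by auto
  then have "(2*a - 1) * (2*b - 1) * (a - b) * (a + b - 1) = 0"
    using dd lt c unfolding coincide_def
    by (cases e) (simp_all add: principal_minor_insert principal_minor_singleton
        diag B.diag vA vB' algebra_simps)
  moreover have "2*a - 1 \<noteq> 0" "2*b - 1 \<noteq> 0" using st(1,2) vA by auto
  ultimately consider "a = b" | "a + b = 1" by fastforce
  then show False
  proof cases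
    case 1
    then have "clan_in {p1, p2, p3, p4} {p2, p3}"
      using vA dd unfolding clan_in_pair_iff by auto
    then have "{p2, p3} = {p1, p2, p3, p4}" using indecomposable_onD[OF Q] dd by simp
    then have "p1 \<in> {p2, p3}" by (metis insertI1)
    then show False using dd by blast
  next
    case 2
    then have "clan_in {p1, p2, p3, p4} {p3, p4}"
      using vA dd unfolding clan_in_pair_iff by auto
    then have "{p3, p4} = {p1, p2, p3, p4}" using indecomposable_onD[OF Q] dd by simp
    then have "p1 \<in> {p3, p4}" by (metis insertI1)
    then show False using dd by blast
  qed
qed

lemma cycle_pattern_decomposable:
  assumes lt: "a < n" "b < n" "c < n" "d < n" and d: "distinct [a, b, c, d]"
    and st: "A a d \<noteq> A d a"
    and cc: "coincide e a b" "coincide e a c" "coincide e b d" "coincide e c d" "coincide (\<not> e) a d"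
  shows "\<not> indecomposable_on {a, b, c, d}"
proof
  assume Q: "indecomposable_on {a, b, c, d}"
  have dd: "a \<noteq> b" "a \<noteq> c" "a \<noteq> d" "b \<noteq> c" "b \<noteq> d" "c \<noteq> d" using d by auto
  have "A b a = A b d"
    using coincide_triangle[of b a d e] lt dd coincide_commute[OF lt(1,2)] cc(1,3,5) st by auto
  moreover have "A c a = A c d"
    using coincide_triangle[of c a d e] lt dd coincide_commute[OF lt(1,3)] cc(2,4,5) st by auto
  ultimately have "clan_in {a, b, c, d} {a, d}" unfolding clan_in_pair_iff by auto
  then have "{a, d} = {a, b, c, d}" using indecomposable_onD[OF Q] dd by simp
  then have "b \<in> {a, d}" by (metis insertI1 insertI2)
  then show False using dd by blast
qed

text \<open>Colour the pairs by the mode \<open>e\<close> or \<open>\<not> e\<close> that \<open>B\<close> follows there. The edges at \<open>a\<close> to \<open>b\<close> and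
  \<open>c\<close> have colour \<open>e\<close>, the edge to \<open>d\<close> the other one; without monochromatic triangles the
  colouring is then a 4-cycle against a perfect matching or two complementary paths.\<close>
lemma not_indecomposable_split_at_vertex:
  assumes lt: "a < n" "b < n" "c < n" "d < n" and dist: "distinct [a, b, c, d]"
    and st: "\<forall>x\<in>{a, b, c, d}. \<forall>y\<in>{a, b, c, d}. x \<noteq> y \<longrightarrow> A x y \<noteq> A y x"
    and ab: "coincide e a b" and ac: "coincide e a c" and ad: "coincide (\<not> e) a d"
    and bc: "coincide (\<not> e) b c" and bcd: "\<not> (coincide (\<not> e) b d \<and> coincide (\<not> e) c d)"
  shows "\<not> indecomposable_on {a, b, c, d}"
proof -
  have ba: "coincide e b a" using ab coincide_commute[OF lt(1,2)] by blast
  have ca: "coincide e c a" using ac coincide_commute[OF lt(1,3)] by blast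
  have cb: "coincide (\<not> e) c b" using bc coincide_commute[OF lt(2,3)] by blast
  have sbd: "A b d \<noteq> A d b" and scd: "A c d \<noteq> A d c" using st dist by auto
  consider "coincide e b d" "coincide e c d" | "coincide e b d" "coincide (\<not> e) c d"
    | "coincide (\<not> e) b d" "coincide e c d"
    using bcd coincide_not_iff[OF lt(2,4) sbd, of e] coincide_not_iff[OF lt(3,4) scd, of e] by blast
  then show ?thesis
  proof cases
    case 1
    then show ?thesis using cycle_pattern_decomposable[OF lt dist] st dist ab ac ad by auto
  next
    case 2
    have "\<not> indecomposable_on {c, a, b, d}"
      using path_pattern_decomposable[of c a b d e] lt dist st ca ab 2 cb ad by auto
    then show ?thesis by (simp add: insert_commute)
  next
    case 3
    have "\<not> indecomposable_on {b, a, c, d}"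
      using path_pattern_decomposable[of b a c d e] lt dist st ba ac 3 bc ad by auto
    then show ?thesis by (simp add: insert_commute)
  qed
qed


text \<open>All pairs are asymmetric, so each has exactly one colour, and no triangle is monochromatic;
  hence some colour appears exactly twice at \<open>a\<close>.\<close>
lemma not_indecomposable_if_triangles_incoherent:
  assumes lt: "a < n" "b < n" "c < n" "d < n" and dist: "distinct [a, b, c, d]"
    and nt: "\<not> coherent {b, c, d}" "\<not> coherent {a, c, d}" "\<not> coherent {a, b, d}"
      "\<not> coherent {a, b, c}"
  shows "\<not> indecomposable_on {a, b, c, d}"
proof
  assume Q: "indecomposable_on {a, b, c, d}"
  have "A a b \<noteq> A b a" "A a c \<noteq> A c a" "A a d \<noteq> A d a" "A b c \<noteq> A c b" "A b d \<noteq> A d b"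
    "A c d \<noteq> A d c"
    using asymmetric_if_not_coherent_triangle[of a b c] asymmetric_if_not_coherent_triangle[of a c b]
      asymmetric_if_not_coherent_triangle[of a d b] asymmetric_if_not_coherent_triangle[of b c d]
      asymmetric_if_not_coherent_triangle[of b d c] asymmetric_if_not_coherent_triangle[of c d b]
      nt lt dist by (auto simp: insert_commute)
  then have st: "\<forall>x\<in>{a, b, c, d}. \<forall>y\<in>{a, b, c, d}. x \<noteq> y \<longrightarrow> A x y \<noteq> A y x"
    by (auto dest: not_sym)
  have neg: "coincide (\<not> e') x y \<longleftrightarrow> \<not> coincide e' x y"
    if "x \<in> {a, b, c, d}" "y \<in> {a, b, c, d}" "x \<noteq> y" for e' x y
    using coincide_not_iff[of x y e'] st that lt by auto
  have com: "coincide e' y x \<longleftrightarrow> coincide e' x y"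
    if "x \<in> {a, b, c, d}" "y \<in> {a, b, c, d}" for e' x y
    using coincide_commute[of x y e'] that lt by auto
  note tri = not_coherent_triangle[OF nt(1) lt(2-4)] not_coherent_triangle[OF nt(2) lt(1,3,4)]
    not_coherent_triangle[OF nt(3) lt(1,2,4)] not_coherent_triangle[OF nt(4) lt(1-3)]
  obtain e where ab: "coincide e a b" using coincide_cases[OF lt(1,2), of True] by blast
  consider "coincide e a c" "coincide e a d" | "coincide e a c" "\<not> coincide e a d"
    | "\<not> coincide e a c" "coincide e a d" | "\<not> coincide e a c" "\<not> coincide e a d"
    by blast
  then show False
  proof cases
    case 1
    then have "coincide (\<not> e) b c" "coincide (\<not> e) b d" "coincide (\<not> e) c d"
      using tri(2-4)[of e] ab neg dist by auto
    then show False using tri(1)[of "\<not> e"] by blast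
  next
    case 2
    then have "coincide (\<not> e) a d" "coincide (\<not> e) b c" using tri(4)[of e] ab neg dist by auto
    then show False
      using not_indecomposable_split_at_vertex[OF lt dist st ab 2(1)] tri(1)[of "\<not> e"] Q by blast
  next
    case 3
    then have "coincide (\<not> e) a c" "coincide (\<not> e) b d" using tri(3)[of e] ab neg dist by auto
    moreover have "\<not> (coincide (\<not> e) b c \<and> coincide (\<not> e) d c)"
      using tri(1)[of "\<not> e"] calculation com by auto
    moreover have "{a, b, d, c} = {a, b, c, d}" by auto
    ultimately show False
      using not_indecomposable_split_at_vertex[of a b d c e] lt dist st ab 3(2) Q by auto
  next
    case 4
    then have "coincide (\<not> e) a c" "coincide (\<not> e) a d" "coincide e c d"
      using tri(2)[of "\<not> e"] neg dist by auto
    moreover have "\<not> (coincide e c b \<and> coincide e d b)"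
      using tri(1)[of e] calculation com by auto
    moreover have "{a, c, d, b} = {a, b, c, d}" by auto
    ultimately show False
      using not_indecomposable_split_at_vertex[of a c d b "\<not> e"] lt dist st ab Q by auto
  qed
qed

lemma coherent_if_card_4:
  assumes Q: "Q \<subseteq> {0..<n}" "card Q = 4" "indecomposable_on Q"
  shows "coherent Q"
proof (rule ccontr)
  assume nc: "\<not> coherent Q"
  obtain a where a: "a \<in> Q" using Q(2) by fastforce
  then have "card (Q - {a}) = 3" using Q(2) by (simp add: card_Diff_singleton_if)
  then obtain b c d where "Q - {a} = {b, c, d}" "b \<noteq> c" "b \<noteq> d" "c \<noteq> d"
    using card_3_iff by metis
  then have Qe: "Q = {a, b, c, d}" and dist: "distinct [a, b, c, d]" using a by auto
  have lt: "a < n" "b < n" "c < n" "d < n" using Q(1) Qe by auto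
  have "\<not> coherent (Q - {x})" if "x \<in> Q" for x
    using coherent_if_coincide_on_Diff[OF Q(1,3) that] nc unfolding coherent_def by blast
  moreover have "Q - {a} = {b, c, d}" "Q - {b} = {a, c, d}" "Q - {c} = {a, b, d}"
    "Q - {d} = {a, b, c}"
    using Qe dist by auto
  ultimately have "\<not> coherent {b, c, d}" "\<not> coherent {a, c, d}" "\<not> coherent {a, b, d}"
    "\<not> coherent {a, b, c}"
    using Qe by (metis insertCI)+
  then show False using not_indecomposable_if_triangles_incoherent[OF lt dist] Q(3) Qe by blast
qed

lemma coherent_all:
  assumes V: "indecomposable_on {0..<n}" and "3 \<le> n"
  shows "coherent {0..<n}"
proof -
  obtain Z where Z: "Z \<subseteq> {0..<n}" "card Z = 3 \<or> card Z = 4" "indecomposable_on Z"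
    using indecomposable_on_small_subset[OF V \<open>3 \<le> n\<close>] by blast
  then have "coherent Z" using coherent_if_card_3 coherent_if_card_4 by blast
  then show ?thesis using coherent_all_if_coherent_subset[OF V Z(1,3)] Z(2) by auto
qed

end

theorem proposition2p3:
  fixes n :: nat and A B :: "nat \<Rightarrow> nat \<Rightarrow> real"
  assumes "n \<ge> 4"
    and "gen_tournament n A" and "gen_tournament n B"
    and "indecomposable n A"
    and "\<forall>S. S \<subseteq> {0..<n} \<and> S \<noteq> {} \<longrightarrow> principal_minor A S = principal_minor B S"
  shows "(\<forall>i<n. \<forall>j<n. A i j = B i j) \<or> (\<forall>i<n. \<forall>j<n. A i j = B j i)"
proof -
  interpret same_principal_minors n A B
    using assms(2,3,5) by unfold_locales
  have "coherent {0..<n}"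
    using coherent_all indecomposable_on_all[OF assms(4)] assms(1) by simp
  then obtain e where "coincide_on e {0..<n}" unfolding coherent_def by blast
  then show ?thesis
    unfolding coincide_on_def coincide_def by (cases e) auto
qed

end
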